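(* Let $K$ be a field and $\nu$ a valuation on $K[x]$. If $\mathbf{Q}\subseteq K[x]$ is a complete set for $\nu$ (not necessarily consisting of key polynomials), then $\mathbf{Q}$ satisfies (GS1$^*$).
   Context: $\nu:K[x]\to\Gamma\cup\{\infty\}$ is a valuation ($\Gamma$ an ordered abelian group) with $\nu(f)=\infty$ only for $f=0$. For monic nonconstant $Q$, the $Q$-expansion of $f$ is the unique expression $f=f_0+f_1Q+\dots+f_nQ^n$ with each $f_i=0$ or $\deg f_i<\deg Q$, and $\nu_Q(f)=\min_i\nu(f_iQ^i)$. A set $\mathbf{Q}$ of monic nonconstant polynomials is complete for $\nu$ if for every nonconstant $f\in K[x]$ there is $Q\in\mathbf{Q}$ with $\deg Q\le\deg f$ and $\nu_Q(f)=\nu(f)$. For finitely supported $\lambda:\mathbf{Q}\to\mathbb{N}_0$ let $\mathbf{Q}^\lambda=\prod_{\lambda(Q)\neq0}Q^{\lambda(Q)}$. (GS1$^*$): for every $f\in K[x]$ there exist $r\ge0$, $a_1,\dots,a_r\in K$ and finitely supported $\lambda_1,\dots,\lambda_r:\mathbf{Q}\to\mathbb{N}_0$ with $f=\sum_{i=1}^ra_i\mathbf{Q}^{\lambda_i}$, $\nu(a_i\mathbf{Q}^{\lambda_i})\ge\nu(f)$ for all $i$, and $\deg Q\le\deg f$ whenever $\lambda_i(Q)\ne0$ for some $i$. *)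

theory Defs
  imports "HOL-Computational_Algebra.Polynomial" "HOL-Library.Extended"
begin

text \<open>A valuation on K[x] with values in an ordered abelian group 'g together with
  infinity: values live in 'g extended (Fin g, or Pinf = infinity); Minf is never taken.\<close>
definition is_valuation :: "('a::field poly \<Rightarrow> 'g::linordered_ab_group_add extended) \<Rightarrow> bool" where
  "is_valuation \<nu> \<longleftrightarrow>
     (\<forall>f. \<nu> f \<noteq> Minf) \<and>
     (\<forall>f. \<nu> f = Pinf \<longleftrightarrow> f = 0) \<and>
     (\<forall>f g. \<nu> (f * g) = \<nu> f + \<nu> g) \<and>
     (\<forall>f g. min (\<nu> f) (\<nu> g) \<le> \<nu> (f + g))"

definition qexp :: "'a::field poly \<Rightarrow> 'a poly \<Rightarrow> nat \<Rightarrow> 'a poly" where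
  "qexp Q f = (THE c. finite {i. c i \<noteq> 0} \<and>
                      (\<forall>i. c i = 0 \<or> degree (c i) < degree Q) \<and>
                      f = (\<Sum>i\<in>{i. c i \<noteq> 0}. c i * Q ^ i))"

definition nuQ :: "('a::field poly \<Rightarrow> 'g::linordered_ab_group_add extended) \<Rightarrow> 'a poly \<Rightarrow> 'a poly \<Rightarrow> 'g extended" where
  "nuQ \<nu> Q f = (if {i. qexp Q f i \<noteq> 0} = {} then Pinf
                 else Min ((\<lambda>i. \<nu> (qexp Q f i * Q ^ i)) ` {i. qexp Q f i \<noteq> 0}))"

definition complete_set :: "('a::field poly \<Rightarrow> 'g::linordered_ab_group_add extended) \<Rightarrow> 'a poly set \<Rightarrow> bool" where
  "complete_set \<nu> QS \<longleftrightarrow>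
     (\<forall>f. degree f \<ge> 1 \<longrightarrow> (\<exists>Q\<in>QS. degree Q \<le> degree f \<and> nuQ \<nu> Q f = \<nu> f))"

definition qpow :: "('a::field poly \<Rightarrow> nat) \<Rightarrow> 'a poly" where
  "qpow lam = (\<Prod>Q\<in>{Q. lam Q \<noteq> 0}. Q ^ lam Q)"

definition GS1_star :: "('a::field poly \<Rightarrow> 'g::linordered_ab_group_add extended) \<Rightarrow> 'a poly set \<Rightarrow> bool" where
  "GS1_star \<nu> QS \<longleftrightarrow>
     (\<forall>f. \<exists>(r::nat) (a::nat \<Rightarrow> 'a) (lam::nat \<Rightarrow> 'a poly \<Rightarrow> nat).
        (\<forall>i\<in>{1..r}. finite {Q. lam i Q \<noteq> 0} \<and> {Q. lam i Q \<noteq> 0} \<subseteq> QS) \<and>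
        f = (\<Sum>i=1..r. smult (a i) (qpow (lam i))) \<and>
        (\<forall>i\<in>{1..r}. \<nu> (smult (a i) (qpow (lam i))) \<ge> \<nu> f) \<and>
        (\<forall>i\<in>{1..r}. \<forall>Q. lam i Q \<noteq> 0 \<longrightarrow> degree Q \<le> degree f))"

end

theory Submission
  imports Defs
begin

text \<open>Induction on the degree. A constant is a multiple of the empty product. Otherwise
  completeness gives Q \<in> QS with deg Q \<le> deg f and \<nu>_Q(f) = \<nu>(f), so the Q-expansion
  f = \<Sum> f_i Q^i has \<nu>(f_i Q^i) \<ge> \<nu>(f) for all i. Each f_i has degree below deg Q \<le> deg f,
  hence by induction is a sum of monomials a Q^\<lambda> with \<nu>(a Q^\<lambda>) \<ge> \<nu>(f_i); multiplying these
  by Q^i yields monomials of value \<ge> \<nu>(f_i Q^i) \<ge> \<nu>(f), and collecting them represents f.\<close>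

fun qadic_digit :: "'a::field poly \<Rightarrow> 'a poly \<Rightarrow> nat \<Rightarrow> 'a poly" where
  "qadic_digit Q f 0 = f mod Q"
| "qadic_digit Q f (Suc i) = qadic_digit Q (f div Q) i"

lemma qadic_digit_zero [simp]: "qadic_digit Q 0 i = 0"
  by (induction i) auto

lemma degree_qadic_digit:
  "degree Q \<ge> 1 \<Longrightarrow> qadic_digit Q f i = 0 \<or> degree (qadic_digit Q f i) < degree Q"
proof (induction i arbitrary: f)
  case 0
  then show ?case using degree_mod_less[of Q f] by (cases "Q = 0") auto
qed simp

lemma qadic_digit_eq_0_if_degree_less:
  "degree Q \<ge> 1 \<Longrightarrow> degree f < i \<Longrightarrow> qadic_digit Q f i = 0"
proof (induction i arbitrary: f)
  case (Suc j)
  show ?case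
  proof (cases "degree f = 0")
    case True
    then have "f div Q = 0" using Suc.prems by (intro div_poly_less) simp
    then show ?thesis by simp
  next
    case False
    then have "degree (f div Q) < degree f" using Suc.prems by (intro degree_div_less) auto
    then show ?thesis using Suc by simp
  qed
qed simp

lemma qadic_expansion:
  "degree Q \<ge> 1 \<Longrightarrow> degree f < N \<Longrightarrow> f = (\<Sum>i<N. qadic_digit Q f i * Q ^ i)"
proof (induction N arbitrary: f)
  case (Suc M)
  have f_div: "f div Q = (\<Sum>i<M. qadic_digit Q (f div Q) i * Q ^ i)"
  proof (cases "f div Q = 0")
    case False
    then have "degree f \<noteq> 0"
      using Suc.prems div_poly_less[of f Q] by fastforce
    then have "degree (f div Q) < degree f" using Suc.prems by (intro degree_div_less) auto
    then show ?thesis using Suc by simp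
  qed simp
  have "(\<Sum>i<Suc M. qadic_digit Q f i * Q ^ i)
      = f mod Q + Q * (\<Sum>i<M. qadic_digit Q (f div Q) i * Q ^ i)"
    by (simp add: sum.lessThan_Suc_shift sum_distrib_left mult_ac del: sum.lessThan_Suc)
  also have "\<dots> = f" using mult_div_mod_eq[of Q f] by (simp add: f_div[symmetric] add.commute)
  finally show ?case by simp
qed simp

lemma qadic_digit_of_expansion:
  assumes "degree Q \<ge> 1" "\<forall>j. c j = 0 \<or> degree (c j) < degree Q" "\<forall>j\<ge>N. c j = 0"
  shows "qadic_digit Q (\<Sum>j<N. c j * Q ^ j) i = c i"
  using assms(2,3)
proof (induction N arbitrary: c i)
  case (Suc M)
  have split: "(\<Sum>j<Suc M. c j * Q ^ j) = c 0 + (\<Sum>j<M. c (Suc j) * Q ^ j) * Q"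
    by (simp add: sum.lessThan_Suc_shift sum_distrib_left sum_distrib_right mult_ac
        del: sum.lessThan_Suc)
  have "c 0 mod Q = c 0" "c 0 div Q = 0"
    using Suc.prems(1) by (metis mod_0 mod_poly_less, metis div_0 div_poly_less)
  moreover have "Q \<noteq> 0" using assms(1) by auto
  moreover have "qadic_digit Q (\<Sum>j<M. c (Suc j) * Q ^ j) k = c (Suc k)" for k
    using Suc.IH[of "\<lambda>j. c (Suc j)" k] Suc.prems by auto
  ultimately show ?case
    unfolding split by (cases i) (simp_all add: mod_mult_self2 div_mult_self2)
qed simp

lemma qadic_digit_properties:
  assumes Q: "degree Q \<ge> 1"
  shows "finite {i. qadic_digit Q f i \<noteq> 0} \<and>
    (\<forall>i. qadic_digit Q f i = 0 \<or> degree (qadic_digit Q f i) < degree Q) \<and>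
    f = (\<Sum>i\<in>{i. qadic_digit Q f i \<noteq> 0}. qadic_digit Q f i * Q ^ i)"
proof -
  have supp: "{i. qadic_digit Q f i \<noteq> 0} \<subseteq> {..<Suc (degree f)}"
    using qadic_digit_eq_0_if_degree_less[OF Q] by (auto simp: not_less_eq[symmetric])
  have "f = (\<Sum>i<Suc (degree f). qadic_digit Q f i * Q ^ i)"
    by (rule qadic_expansion[OF Q]) simp
  also have "\<dots> = (\<Sum>i\<in>{i. qadic_digit Q f i \<noteq> 0}. qadic_digit Q f i * Q ^ i)"
    using supp by (intro sum.mono_neutral_right) auto
  finally show ?thesis
    using supp finite_subset degree_qadic_digit[OF Q] by blast
qed

lemma qexp_eq_qadic_digit:
  assumes Q: "degree Q \<ge> 1"
  shows "qexp Q f = qadic_digit Q f"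
  unfolding qexp_def
proof (rule the_equality)
  fix c assume c: "finite {i. c i \<noteq> 0} \<and> (\<forall>i. c i = 0 \<or> degree (c i) < degree Q) \<and>
    f = (\<Sum>i\<in>{i. c i \<noteq> 0}. c i * Q ^ i)"
  then obtain N where N: "{i. c i \<noteq> 0} \<subseteq> {..<N}" using finite_nat_bounded by blast
  have "f = (\<Sum>i\<in>{i. c i \<noteq> 0}. c i * Q ^ i)" using c by blast
  also have "\<dots> = (\<Sum>i<N. c i * Q ^ i)"
    by (rule sum.mono_neutral_left) (use N in auto)
  finally have f_eq: "f = (\<Sum>i<N. c i * Q ^ i)" .
  have "\<forall>j\<ge>N. c j = 0" using N by auto
  then have "qadic_digit Q f i = c i" for i
    unfolding f_eq using qadic_digit_of_expansion[OF Q] c by blast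
  then show "c = qadic_digit Q f" by auto
qed (rule qadic_digit_properties[OF Q])

lemma qexp_properties:
  assumes "degree Q \<ge> 1"
  shows "finite {i. qexp Q f i \<noteq> 0}"
    and "qexp Q f i = 0 \<or> degree (qexp Q f i) < degree Q"
    and "f = (\<Sum>i\<in>{i. qexp Q f i \<noteq> 0}. qexp Q f i * Q ^ i)"
  using qadic_digit_properties[OF assms, of f] unfolding qexp_eq_qadic_digit[OF assms] by blast+

lemma nuQ_le_term:
  assumes "degree Q \<ge> 1" "qexp Q f i \<noteq> 0"
  shows "nuQ \<nu> Q f \<le> \<nu> (qexp Q f i * Q ^ i)"
  using assms qexp_properties(1)[OF assms(1)] unfolding nuQ_def by (auto intro: Min_le)

lemma qpow_increment:
  assumes fin: "finite {R. l R \<noteq> 0}"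
  shows "qpow (l(Q := l Q + i)) = qpow l * Q ^ i"
proof (cases "i = 0")
  case False
  let ?S = "{R. l R \<noteq> 0}" and ?l = "l(Q := l Q + i)"
  have supp: "{R. ?l R \<noteq> 0} = insert Q (?S - {Q})" using False by auto
  have rest: "(\<Prod>R\<in>?S - {Q}. R ^ ?l R) = (\<Prod>R\<in>?S - {Q}. R ^ l R)"
    by (rule prod.cong) auto
  have "qpow ?l = Q ^ (l Q + i) * (\<Prod>R\<in>?S - {Q}. R ^ ?l R)"
    unfolding qpow_def supp using fin by (subst prod.insert) auto
  then have "qpow ?l = Q ^ (l Q + i) * (\<Prod>R\<in>?S - {Q}. R ^ l R)" by (simp only: rest)
  moreover have "qpow l = Q ^ l Q * (\<Prod>R\<in>?S - {Q}. R ^ l R)"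
  proof (cases "Q \<in> ?S")
    case True
    then show ?thesis unfolding qpow_def using prod.remove[OF fin True] by blast
  next
    case False
    then show ?thesis unfolding qpow_def by simp
  qed
  ultimately show ?thesis by (simp add: power_add mult_ac)
qed simp

definition qmonomial :: "'a::field \<times> ('a poly \<Rightarrow> nat) \<Rightarrow> 'a poly" where
  "qmonomial p = smult (fst p) (qpow (snd p))"

definition admissible_qmonomial ::
    "('a::field poly \<Rightarrow> 'g::linordered_ab_group_add extended) \<Rightarrow> 'a poly set \<Rightarrow> 'a poly \<Rightarrow>
     'a \<times> ('a poly \<Rightarrow> nat) \<Rightarrow> bool" where
  "admissible_qmonomial \<nu> QS f p \<longleftrightarrow>
     finite {Q. snd p Q \<noteq> 0} \<and> {Q. snd p Q \<noteq> 0} \<subseteq> QS \<and> \<nu> f \<le> \<nu> (qmonomial p) \<and>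
     (\<forall>Q. snd p Q \<noteq> 0 \<longrightarrow> degree Q \<le> degree f)"

definition qmonomial_expressible ::
    "('a::field poly \<Rightarrow> 'g::linordered_ab_group_add extended) \<Rightarrow> 'a poly set \<Rightarrow> 'a poly \<Rightarrow>
     'a poly \<Rightarrow> bool" where
  "qmonomial_expressible \<nu> QS f g \<longleftrightarrow>
     (\<exists>ps. (\<forall>p\<in>set ps. admissible_qmonomial \<nu> QS f p) \<and> g = sum_list (map qmonomial ps))"

lemma qmonomial_expressible_sum:
  assumes "finite S" "\<And>i. i \<in> S \<Longrightarrow> qmonomial_expressible \<nu> QS f (g i)"
  shows "qmonomial_expressible \<nu> QS f (\<Sum>i\<in>S. g i)"
  using assms
proof (induction S rule: finite_induct)
  case empty
  show ?case unfolding qmonomial_expressible_def by (intro exI[of _ "[]"]) simp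
next
  case (insert i S)
  obtain ps qs where
    "\<forall>p\<in>set ps. admissible_qmonomial \<nu> QS f p" "g i = sum_list (map qmonomial ps)"
    "\<forall>p\<in>set qs. admissible_qmonomial \<nu> QS f p" "(\<Sum>i\<in>S. g i) = sum_list (map qmonomial qs)"
    using insert unfolding qmonomial_expressible_def by (metis insertCI)
  then show ?case
    unfolding qmonomial_expressible_def using insert(1,2)
    by (intro exI[of _ "ps @ qs"]) auto
qed

lemma qmonomial_expressible_constant:
  assumes "degree f = 0"
  shows "qmonomial_expressible \<nu> QS f f"
proof -
  have empty_product: "qpow (\<lambda>_. 0) = 1" by (simp add: qpow_def)
  show ?thesis
    unfolding qmonomial_expressible_def admissible_qmonomial_def qmonomial_def
    by (intro exI[of _ "[(coeff f 0, \<lambda>_. 0)]"])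
      (simp add: empty_product degree_0_id[OF assms] smult_one)
qed

lemma admissible_qmonomial_mult_power:
  assumes val: "is_valuation \<nu>"
    and p: "admissible_qmonomial \<nu> QS g p"
    and Q: "Q \<in> QS" "degree Q \<le> degree f"
    and deg: "degree g \<le> degree f" and bound: "\<nu> f \<le> \<nu> (g * Q ^ i)"
  shows "admissible_qmonomial \<nu> QS f (fst p, (snd p)(Q := snd p Q + i))"
    and "qmonomial (fst p, (snd p)(Q := snd p Q + i)) = qmonomial p * Q ^ i"
proof -
  have mult: "\<nu> (a * b) = \<nu> a + \<nu> b" for a b using val unfolding is_valuation_def by blast
  have fin: "finite {R. snd p R \<noteq> 0}" using p unfolding admissible_qmonomial_def by blast
  show shifted: "qmonomial (fst p, (snd p)(Q := snd p Q + i)) = qmonomial p * Q ^ i"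
    unfolding qmonomial_def using qpow_increment[OF fin] by (simp add: mult_smult_left)
  have "\<nu> f \<le> \<nu> g + \<nu> (Q ^ i)" using bound by (simp add: mult)
  also have "\<dots> \<le> \<nu> (qmonomial p) + \<nu> (Q ^ i)"
    using p unfolding admissible_qmonomial_def by (intro add_right_mono) blast
  finally have "\<nu> f \<le> \<nu> (qmonomial p * Q ^ i)" by (simp add: mult)
  moreover have supp: "{R. ((snd p)(Q := snd p Q + i)) R \<noteq> 0} \<subseteq> insert Q {R. snd p R \<noteq> 0}"
    by auto
  moreover have "degree R \<le> degree f" if "R \<in> insert Q {R. snd p R \<noteq> 0}" for R
    using that p Q(2) deg unfolding admissible_qmonomial_def by (auto intro: order_trans)
  ultimately show "admissible_qmonomial \<nu> QS f (fst p, (snd p)(Q := snd p Q + i))"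
    using p Q(1) fin finite_subset[OF supp] unfolding admissible_qmonomial_def shifted
    by (simp add: subset_iff)
qed

lemma qmonomial_expressible_mult_power:
  assumes val: "is_valuation \<nu>"
    and g: "qmonomial_expressible \<nu> QS g g"
    and Q: "Q \<in> QS" "degree Q \<le> degree f"
    and deg: "degree g \<le> degree f" and bound: "\<nu> f \<le> \<nu> (g * Q ^ i)"
  shows "qmonomial_expressible \<nu> QS f (g * Q ^ i)"
proof -
  obtain ps where ps: "\<forall>p\<in>set ps. admissible_qmonomial \<nu> QS g p"
    and g_eq: "g = sum_list (map qmonomial ps)"
    using g unfolding qmonomial_expressible_def by blast
  let ?shift = "\<lambda>p. (fst p, (snd p)(Q := snd p Q + i))"
  note shift = admissible_qmonomial_mult_power[OF val _ Q deg bound]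
  have "sum_list (map qmonomial (map ?shift ps)) = sum_list (map (\<lambda>p. qmonomial p * Q ^ i) ps)"
    using ps shift(2) by (simp add: o_def cong: map_cong)
  also have "\<dots> = g * Q ^ i" by (simp add: g_eq sum_list_mult_const)
  finally show ?thesis
    unfolding qmonomial_expressible_def using ps shift(1)
    by (intro exI[of _ "map ?shift ps"]) auto
qed

lemma qmonomial_expressible_if_complete:
  assumes val: "is_valuation \<nu>"
    and QS: "\<forall>Q\<in>QS. degree Q \<ge> 1"
    and complete: "complete_set \<nu> QS"
  shows "qmonomial_expressible \<nu> QS f f"
proof (induction "degree f" arbitrary: f rule: less_induct)
  case less
  show ?case
  proof (cases "degree f = 0")
    case True
    then show ?thesis by (rule qmonomial_expressible_constant)
  next
    case False
    then obtain Q where Q: "Q \<in> QS" "degree Q \<le> degree f" "nuQ \<nu> Q f = \<nu> f"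
      using complete unfolding complete_set_def by force
    have dQ: "degree Q \<ge> 1" using QS Q(1) by blast
    let ?c = "qexp Q f" let ?S = "{i. qexp Q f i \<noteq> 0}"
    have "qmonomial_expressible \<nu> QS f (?c i * Q ^ i)" if i: "i \<in> ?S" for i
    proof -
      have "degree (?c i) < degree Q" using qexp_properties(2)[OF dQ] i by auto
      then have "degree (?c i) < degree f" using Q(2) by linarith
      moreover have "\<nu> f \<le> \<nu> (?c i * Q ^ i)" using nuQ_le_term[OF dQ, of f i \<nu>] i Q(3) by simp
      ultimately show ?thesis
        using less qmonomial_expressible_mult_power[OF val _ Q(1,2)] by simp
    qed
    then have "qmonomial_expressible \<nu> QS f (\<Sum>i\<in>?S. ?c i * Q ^ i)"
      by (intro qmonomial_expressible_sum qexp_properties(1)[OF dQ])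
    then show ?thesis using qexp_properties(3)[OF dQ, of f] by (simp only:)
  qed
qed

lemma GS1_star_if_qmonomial_expressible:
  assumes "\<And>f. qmonomial_expressible \<nu> QS f f"
  shows "GS1_star \<nu> QS"
  unfolding GS1_star_def
proof
  fix f
  obtain ps where ps: "\<forall>p\<in>set ps. admissible_qmonomial \<nu> QS f p"
    and f_eq: "f = sum_list (map qmonomial ps)"
    using assms unfolding qmonomial_expressible_def by blast
  define a where "a i = fst (ps ! (i - 1))" for i
  define lam where "lam i = snd (ps ! (i - 1))" for i
  have term_i: "smult (a i) (qpow (lam i)) = qmonomial (ps ! (i - 1))" for i
    by (simp add: a_def lam_def qmonomial_def)
  have "f = (\<Sum>k<length ps. qmonomial (ps ! k))"
    using f_eq by (simp add: sum_list_sum_nth atLeast0LessThan)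
  also have "\<dots> = (\<Sum>k<length ps. smult (a (Suc k)) (qpow (lam (Suc k))))"
    by (simp add: term_i)
  also have "\<dots> = (\<Sum>i=1..length ps. smult (a i) (qpow (lam i)))"
    by (rule sum_bounds_lt_plus1)
  finally have f_sum: "f = (\<Sum>i=1..length ps. smult (a i) (qpow (lam i)))" .
  show "\<exists>(r::nat) (a::nat \<Rightarrow> 'a) (lam::nat \<Rightarrow> 'a poly \<Rightarrow> nat).
        (\<forall>i\<in>{1..r}. finite {Q. lam i Q \<noteq> 0} \<and> {Q. lam i Q \<noteq> 0} \<subseteq> QS) \<and>
        f = (\<Sum>i=1..r. smult (a i) (qpow (lam i))) \<and>
        (\<forall>i\<in>{1..r}. \<nu> (smult (a i) (qpow (lam i))) \<ge> \<nu> f) \<and>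
        (\<forall>i\<in>{1..r}. \<forall>Q. lam i Q \<noteq> 0 \<longrightarrow> degree Q \<le> degree f)"
  proof (intro exI conjI ballI)
    show "f = (\<Sum>i=1..length ps. smult (a i) (qpow (lam i)))" by (rule f_sum)
  next
    fix i assume "i \<in> {1..length ps}"
    then have "admissible_qmonomial \<nu> QS f (ps ! (i - 1))" using ps by auto
    then show "finite {Q. lam i Q \<noteq> 0}" "{Q. lam i Q \<noteq> 0} \<subseteq> QS"
      "\<nu> (smult (a i) (qpow (lam i))) \<ge> \<nu> f" "\<forall>Q. lam i Q \<noteq> 0 \<longrightarrow> degree Q \<le> degree f"
      unfolding admissible_qmonomial_def term_i by (simp_all add: lam_def)
  qed
qed

theorem proposition5p2:
  fixes \<nu> :: "'a::field poly \<Rightarrow> 'g::linordered_ab_group_add extended"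
    and QS :: "'a poly set"
  assumes "is_valuation \<nu>"
    and "\<forall>Q\<in>QS. lead_coeff Q = 1 \<and> degree Q \<ge> 1"
    and "complete_set \<nu> QS"
  shows "GS1_star \<nu> QS"
  using assms by (intro GS1_star_if_qmonomial_expressible qmonomial_expressible_if_complete) auto

end
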